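(* Let $\mathbf{u}$ be quasi-definite with SMOP $(P_n)$ satisfying $xP_n=P_{n+1}+b_nP_n+a_nP_{n-1}$, monic Jacobi matrix $J$, and let $c\in\mathbb{C}$ with $P_n(c)\ne0$ for all $n$. Set $\beta_n=-P_{n+1}(c)/P_n(c)$ ($n\ge0$) and $\ell_n=-a_nP_{n-1}(c)/P_n(c)$ ($n\ge1$), so that $J-cI=LU$ with $L$ lower bidiagonal (diagonal $1$, subdiagonal $\ell_1,\ell_2,\dots$) and $U$ upper bidiagonal (diagonal $\beta_0,\beta_1,\dots$, superdiagonal $1$). Let $J_\alpha$ be the monic Jacobi matrix of the polynomials $R_n(x)=\frac{\mathbf{u}_0}{\widetilde{\mathbf{u}}_0}[(x-c)P^{(1)}_n(x)-P_{n+1}(x)]$, where $\widetilde{\mathbf{u}}=(x-c)\mathbf{u}$, and let $\widetilde J^{(1)}$ be the monic Jacobi matrix of the associated polynomials of the first kind $(\widetilde P^{(1)}_n)$ of $\widetilde{\mathbf{u}}$. Let $L_1$ be the lower bidiagonal matrix with diagonal $1$ and subdiagonal $\ell_2,\ell_3,\dots$, and $U_1$ the upper bidiagonal matrix with diagonal $\beta_1,\beta_2,\dots$ and superdiagonal $1$ (i.e. $L_1=\Lambda L\Lambda^\top$, $U_1=\Lambda U\Lambda^\top$, $\Lambda$ the shift matrix with $\Lambda_{i,i+1}=1$ and zeros elsewhere). Then $$J_\alpha-cI=L_1U_1,\qquad \widetilde J^{(1)}-cI=U_1L_1.$$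
   Context: Quasi-definite: all leading principal Hankel minors of the moments nonzero; SMOP = sequence of monic orthogonal polynomials with $xP_n=P_{n+1}+b_nP_n+a_nP_{n-1}$, $P_{-1}=0,P_0=1$, $a_n\neq0$. The monic Jacobi matrix of a sequence satisfying such a recurrence is the semi-infinite tridiagonal matrix with diagonal $(b_0,b_1,\dots)$, superdiagonal entries $1$ and subdiagonal $(a_1,a_2,\dots)$. Associated polynomials of the first kind: monic, $xP^{(1)}_n=P^{(1)}_{n+1}+b_{n+1}P^{(1)}_n+a_{n+1}P^{(1)}_{n-1}$, $P^{(1)}_{-1}=0,P^{(1)}_0=1$. $\langle(x-c)\mathbf{u},p\rangle=\langle\mathbf{u},(x-c)p\rangle$, $\widetilde{\mathbf{u}}_0=\langle\widetilde{\mathbf{u}},1\rangle$. *)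

theory Defs
  imports "HOL-Computational_Algebra.Polynomial" "Jordan_Normal_Form.Determinant"
begin

definition mfun :: "(nat \<Rightarrow> complex) \<Rightarrow> complex poly \<Rightarrow> complex" where
  "mfun m p = (\<Sum>k\<le>degree p. coeff p k * m k)"

definition quasi_definite :: "(nat \<Rightarrow> complex) \<Rightarrow> bool" where
  "quasi_definite m \<longleftrightarrow> (\<forall>n. det (mat (n+1) (n+1) (\<lambda>(i,j). m (i+j))) \<noteq> 0)"

definition is_smop :: "(complex poly \<Rightarrow> complex) \<Rightarrow> (nat \<Rightarrow> complex poly) \<Rightarrow> bool" where
  "is_smop U P \<longleftrightarrow>
     (\<forall>n. degree (P n) = n \<and> lead_coeff (P n) = 1) \<and>
     (\<forall>n k. n \<noteq> k \<longrightarrow> U (P n * P k) = 0) \<and>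
     (\<forall>n. U (P n * P n) \<noteq> 0)"

definition three_term :: "(nat \<Rightarrow> complex poly) \<Rightarrow> (nat \<Rightarrow> complex) \<Rightarrow> (nat \<Rightarrow> complex) \<Rightarrow> bool" where
  "three_term R b a \<longleftrightarrow> R 0 = 1 \<and>
     (\<forall>n. [:0,1:] * R n = R (Suc n) + smult (b n) (R n)
                           + (if n = 0 then 0 else smult (a n) (R (n - 1))))"

fun orth_rec :: "(nat \<Rightarrow> complex) \<Rightarrow> (nat \<Rightarrow> complex) \<Rightarrow> nat \<Rightarrow> complex poly" where
  "orth_rec b a 0 = 1"
| "orth_rec b a (Suc 0) = [:- b 0, 1:]"
| "orth_rec b a (Suc (Suc n)) =
     [:- b (Suc n), 1:] * orth_rec b a (Suc n) - smult (a (Suc n)) (orth_rec b a n)"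

definition assoc1 :: "(nat \<Rightarrow> complex) \<Rightarrow> (nat \<Rightarrow> complex) \<Rightarrow> nat \<Rightarrow> complex poly" where
  "assoc1 b a = orth_rec (\<lambda>n. b (Suc n)) (\<lambda>n. a (Suc n))"

type_synonym imat = "nat \<Rightarrow> nat \<Rightarrow> complex"

definition monic_jacobi :: "(nat \<Rightarrow> complex) \<Rightarrow> (nat \<Rightarrow> complex) \<Rightarrow> imat" where
  "monic_jacobi b a i j =
     (if i = j then b i else if j = Suc i then 1 else if i = Suc j then a i else 0)"

definition monic_jacobi_of :: "(nat \<Rightarrow> complex poly) \<Rightarrow> imat \<Rightarrow> bool" where
  "monic_jacobi_of R J \<longleftrightarrow> (\<exists>b a. three_term R b a \<and> J = monic_jacobi b a)"

definition imat_mult :: "imat \<Rightarrow> imat \<Rightarrow> imat" where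
  "imat_mult A B i j = (\<Sum>k. A i k * B k j)"

definition minus_cI :: "imat \<Rightarrow> complex \<Rightarrow> imat" where
  "minus_cI J c i j = J i j - (if i = j then c else 0)"

definition lbidiag :: "(nat \<Rightarrow> complex) \<Rightarrow> imat" where
  "lbidiag s i j = (if i = j then 1 else if i = Suc j then s i else 0)"

definition ubidiag :: "(nat \<Rightarrow> complex) \<Rightarrow> imat" where
  "ubidiag d i j = (if i = j then d i else if j = Suc i then 1 else 0)"

definition lu_beta :: "(nat \<Rightarrow> complex poly) \<Rightarrow> complex \<Rightarrow> nat \<Rightarrow> complex" where
  "lu_beta P c n = - poly (P (Suc n)) c / poly (P n) c"

definition lu_ell :: "(nat \<Rightarrow> complex poly) \<Rightarrow> (nat \<Rightarrow> complex) \<Rightarrow> complex \<Rightarrow> nat \<Rightarrow> complex" where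
  "lu_ell P a c n = - a n * poly (P (n - 1)) c / poly (P n) c"

end

theory Submission
  imports Defs
begin

(* Since P_n(c) \<noteq> 0, the number beta_n = -P_{n+1}(c)/P_n(c) is exactly the one making
   P_{n+1} + beta_n P_n vanish at c. Evaluating the recurrence of P at c gives the
   LU relations b_n = c + beta_n + ell_n and a_{n+1} = ell_{n+1} beta_n.

   The quotients (P_{n+1} + beta_n P_n)/(x - c) are monic and orthogonal for (x - c)u, and such a
   sequence is unique. Rewriting x (P_{n+1} + beta_n P_n) with the recurrence of P and the LU
   relations shows that their recurrence coefficients are c + beta_n + ell_{n+1} and
   beta_n ell_n, i.e. their Jacobi matrix is U L + c I; passing to the associated polynomials
   deletes the first row and column, leaving U_1 L_1 + c I.

   On the other side, (x - c) P^(1)_n - P_{n+1} satisfies the recurrence of the associated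
   polynomials P^(1) except for a defect -a_1 at n = 0; after division by
   b_0 - c = ((x - c)u)_0 / u_0 this only replaces the first diagonal entry b_1 by b_1 - ell_1,
   which is L_1 U_1 + c I entrywise. *)

lemma poly_eqI_eval: "(\<And>z. poly p z = poly q z) \<Longrightarrow> p = (q :: complex poly)"
  using poly_eq_poly_eq_iff by blast

lemma linear_factor_cancel_monic:
  fixes T :: "complex poly"
  assumes "[:- c, 1:] * T = Q" "degree Q = Suc n" "coeff Q (Suc n) = 1"
  shows "degree T = n" and "coeff T n = 1"
proof -
  have "T \<noteq> 0" using assms by auto
  then have "degree Q = Suc (degree T)"
    using assms(1) degree_mult_eq[of "[:- c, 1:]" T] by simp
  then show deg: "degree T = n" using assms(2) by simp
  have "lead_coeff Q = lead_coeff T"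
    unfolding assms(1)[symmetric] by (simp only: lead_coeff_mult) simp
  then show "coeff T n = 1" using deg assms(2,3) by simp
qed

lemma three_term_orth_rec: "three_term (orth_rec b a) b a"
  unfolding three_term_def
proof (intro conjI allI)
  fix n
  show "[:0,1:] * orth_rec b a n = orth_rec b a (Suc n) + smult (b n) (orth_rec b a n)
      + (if n = 0 then 0 else smult (a n) (orth_rec b a (n - 1)))"
    by (cases n) (auto intro!: poly_eqI_eval simp: algebra_simps)
qed simp

lemma monic_jacobi_of_orth_rec: "monic_jacobi_of (orth_rec b a) (monic_jacobi b a)"
  unfolding monic_jacobi_of_def using three_term_orth_rec by blast

lemma three_term_coeffs_unique:
  assumes R: "three_term R b a" and R': "three_term R b' a'" and deg: "\<And>n. degree (R n) = n"
  shows "b n = b' n" and "n \<noteq> 0 \<Longrightarrow> a n = a' n"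
proof -
  have "[:0,1:] * R n
          = R (Suc n) + smult (b n) (R n) + (if n = 0 then 0 else smult (a n) (R (n - 1)))"
    and "[:0,1:] * R n
          = R (Suc n) + smult (b' n) (R n) + (if n = 0 then 0 else smult (a' n) (R (n - 1)))"
    using R R' unfolding three_term_def by blast+
  then have diff: "smult (b n - b' n) (R n)
      + (if n = 0 then 0 else smult (a n - a' n) (R (n - 1))) = 0"
    by (cases "n = 0") (simp_all add: smult_diff_left algebra_simps)
  have R_nz: "R k \<noteq> 0" for k
    using deg[of k] R by (cases k) (auto simp: three_term_def)
  have "coeff (R (n - 1)) n = 0" if "n \<noteq> 0"
    using deg[of "n - 1"] that by (simp add: coeff_eq_0)
  then have "coeff (smult (b n - b' n) (R n)
      + (if n = 0 then 0 else smult (a n - a' n) (R (n - 1)))) n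
      = (b n - b' n) * lead_coeff (R n)"
    by (simp add: deg)
  with diff R_nz show b_eq: "b n = b' n" by simp
  assume "n \<noteq> 0"
  with diff b_eq R_nz[of "n - 1"] show "a n = a' n" by simp
qed

lemma lbidiag_mult_ubidiag: "imat_mult (lbidiag s) (ubidiag d) i j =
  (if i = j then d i + (if i = 0 then 0 else s i) else if j = Suc i then 1
   else if i = Suc j then s i * d j else 0)"
proof (cases i)
  case 0
  have "imat_mult (lbidiag s) (ubidiag d) i j = (\<Sum>k\<in>{0}. lbidiag s i k * ubidiag d k j)"
    unfolding imat_mult_def by (rule suminf_finite) (auto simp: lbidiag_def 0)
  then show ?thesis by (simp add: 0 lbidiag_def ubidiag_def)
next
  case (Suc i')
  have "imat_mult (lbidiag s) (ubidiag d) i j = (\<Sum>k\<in>{i', i}. lbidiag s i k * ubidiag d k j)"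
    unfolding imat_mult_def by (rule suminf_finite) (auto simp: lbidiag_def Suc)
  then show ?thesis by (auto simp: Suc lbidiag_def ubidiag_def)
qed

lemma ubidiag_mult_lbidiag: "imat_mult (ubidiag d) (lbidiag s) i j =
  (if i = j then d i + s (Suc i) else if j = Suc i then 1
   else if i = Suc j then d i * s i else 0)"
proof -
  have "imat_mult (ubidiag d) (lbidiag s) i j = (\<Sum>k\<in>{i, Suc i}. ubidiag d i k * lbidiag s k j)"
    unfolding imat_mult_def by (rule suminf_finite) (auto simp: ubidiag_def)
  then show ?thesis by (auto simp: lbidiag_def ubidiag_def)
qed

section \<open>Linear functionals and their monic orthogonal polynomials\<close>

definition linear_functional :: "(complex poly \<Rightarrow> complex) \<Rightarrow> bool" where
  "linear_functional U \<longleftrightarrow> (\<forall>p q. U (p + q) = U p + U q) \<and> (\<forall>s p. U (smult s p) = s * U p)"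

lemma linear_functional_add: "linear_functional U \<Longrightarrow> U (p + q) = U p + U q"
  by (simp add: linear_functional_def)

lemma linear_functional_smult: "linear_functional U \<Longrightarrow> U (smult s p) = s * U p"
  by (simp add: linear_functional_def)

lemma linear_functional_zero: "linear_functional U \<Longrightarrow> U 0 = 0"
  using linear_functional_smult[of U 0 0] by simp

lemma linear_functional_diff: "linear_functional U \<Longrightarrow> U (p - q) = U p - U q"
  using linear_functional_add[of U "p - q" q] by simp

lemma linear_functional_mult_left: "linear_functional U \<Longrightarrow> linear_functional (\<lambda>p. U (r * p))"
  unfolding linear_functional_def by (simp add: distrib_left)

lemma mfun_eq_sum_atMost: "degree p \<le> N \<Longrightarrow> mfun m p = (\<Sum>k\<le>N. coeff p k * m k)"
  unfolding mfun_def by (rule sum.mono_neutral_left) (auto simp: coeff_eq_0)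

lemma mfun_add: "mfun m (p + q) = mfun m p + mfun m q"
proof -
  let ?N = "max (degree p) (degree q)"
  have "mfun m (p + q) = (\<Sum>k\<le>?N. coeff (p + q) k * m k)"
    by (rule mfun_eq_sum_atMost) (meson degree_add_le max.cobounded1 max.cobounded2)
  also have "\<dots> = (\<Sum>k\<le>?N. coeff p k * m k) + (\<Sum>k\<le>?N. coeff q k * m k)"
    by (simp add: algebra_simps sum.distrib)
  also have "\<dots> = mfun m p + mfun m q"
    by (simp add: mfun_eq_sum_atMost[of p ?N] mfun_eq_sum_atMost[of q ?N])
  finally show ?thesis .
qed

lemma mfun_smult: "mfun m (smult s p) = s * mfun m p"
  by (simp add: mfun_eq_sum_atMost[of "smult s p" "degree p"] mfun_def
      sum_distrib_left mult.assoc)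

lemma linear_functional_mfun: "linear_functional (mfun m)"
  by (simp add: linear_functional_def mfun_add mfun_smult)

lemma smop_degree: "is_smop U P \<Longrightarrow> degree (P n) = n"
  and smop_coeff_degree: "is_smop U P \<Longrightarrow> coeff (P n) n = 1"
  by (metis is_smop_def)+

lemma smop_decompose:
  assumes "is_smop U P"
  obtains r where "q = smult (lead_coeff q) (P (degree q)) + r" and "r = 0 \<or> degree r < degree q"
proof
  let ?r = "q - smult (lead_coeff q) (P (degree q))"
  show "q = smult (lead_coeff q) (P (degree q)) + ?r" by simp
  have "degree ?r \<le> degree q"
    using assms
    by (intro degree_diff_le) (auto intro: order_trans[OF degree_smult_le] simp: smop_degree)
  moreover have "coeff ?r (degree q) = 0"
    using assms by (simp add: smop_coeff_degree)
  ultimately show "?r = 0 \<or> degree ?r < degree q"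
    using degree_less_if_less_eqI by blast
qed

lemma smop_orth_lower:
  assumes S: "is_smop U P" and U: "linear_functional U" and "degree q < n"
  shows "U (P n * q) = 0"
  using assms(3)
proof (induction "degree q" arbitrary: q rule: less_induct)
  case less
  obtain r where q: "q = smult (lead_coeff q) (P (degree q)) + r"
    and r: "r = 0 \<or> degree r < degree q"
    using smop_decompose[OF S] .
  have "U (P n * P (degree q)) = 0" using S less.prems unfolding is_smop_def by auto
  moreover have "U (P n * r) = 0"
  proof (cases "r = 0")
    case False
    with r have "degree r < degree q" by simp
    with less show ?thesis by simp
  qed (simp add: linear_functional_zero[OF U])
  ultimately show ?case
    by (subst q) (simp add: distrib_left linear_functional_add[OF U] linear_functional_smult[OF U])
qed

lemma smop_orth_leading:
  assumes S: "is_smop U P" and U: "linear_functional U"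
  shows "U (P (degree q) * q) = lead_coeff q * U (P (degree q) * P (degree q))"
proof -
  obtain r where q: "q = smult (lead_coeff q) (P (degree q)) + r"
    and r: "r = 0 \<or> degree r < degree q"
    using smop_decompose[OF S] .
  have "U (P (degree q) * r) = 0"
    using r smop_orth_lower[OF S U, of r] linear_functional_zero[OF U] by (cases "r = 0") simp_all
  then show ?thesis
    by (subst (2) q)
      (simp add: distrib_left linear_functional_add[OF U] linear_functional_smult[OF U])
qed

lemma smop_unique:
  assumes S: "is_smop U P" and S': "is_smop U P'" and U: "linear_functional U"
  shows "P' = P"
proof
  fix n
  show "P' n = P n"
  proof (rule ccontr)
    define D where "D = P' n - P n"
    assume "P' n \<noteq> P n"
    then have "D \<noteq> 0" by (simp add: D_def)
    have "degree D \<le> degree (P n)"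
      using S S' by (simp add: D_def degree_diff_le smop_degree)
    moreover have "coeff D (degree (P n)) = 0"
      using S S' by (simp add: D_def smop_degree smop_coeff_degree)
    ultimately have "degree D < degree (P n)"
      using \<open>D \<noteq> 0\<close> by (rule degree_less_if_less_eqI)
    then have d_less: "degree D < n" by (simp add: smop_degree[OF S])
    define d where "d = degree D"
    have "U (P' n * P d) = 0"
      using smop_orth_lower[OF S' U, of "P d" n] d_less by (simp add: d_def smop_degree[OF S])
    moreover have "U (P n * P d) = 0"
      using S d_less unfolding is_smop_def d_def by auto
    ultimately have "U (P d * D) = 0"
      by (simp add: D_def algebra_simps linear_functional_diff[OF U])
    moreover have "U (P d * D) = lead_coeff D * U (P d * P d)"
      unfolding d_def by (rule smop_orth_leading[OF S U])
    moreover have "U (P d * P d) \<noteq> 0"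
      using S unfolding is_smop_def by blast
    ultimately show False
      using \<open>D \<noteq> 0\<close> by simp
  qed
qed

section \<open>The LU factorization of J - c I\<close>

locale smop_nonvanishing_at =
  fixes m :: "nat \<Rightarrow> complex" and P :: "nat \<Rightarrow> complex poly"
    and b a :: "nat \<Rightarrow> complex" and c :: complex
  assumes smop: "is_smop (mfun m) P"
    and rec: "three_term P b a"
    and nonvanishing: "\<And>n. poly (P n) c \<noteq> 0"
begin

abbreviation beta :: "nat \<Rightarrow> complex" where "beta \<equiv> lu_beta P c"
abbreviation ell :: "nat \<Rightarrow> complex" where "ell \<equiv> lu_ell P a c"

lemmas P_orth_lower = smop_orth_lower[OF smop linear_functional_mfun]
lemmas P_orth_leading = smop_orth_leading[OF smop linear_functional_mfun]

lemma P_0: "P 0 = 1"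
  using rec by (simp add: three_term_def)

lemma P_rec: "[:0,1:] * P n = P (Suc n) + smult (b n) (P n)
    + (if n = 0 then 0 else smult (a n) (P (n - 1)))"
  using rec by (simp add: three_term_def)

lemma P_1: "P (Suc 0) = [:- b 0, 1:]"
proof -
  have "[:0,1:] = P (Suc 0) + [:b 0:]" using P_rec[of 0] P_0 by simp
  then have "P (Suc 0) = [:0,1:] - [:b 0:]" by (simp add: eq_diff_eq)
  then show ?thesis by simp
qed

lemma beta_nonzero: "beta n \<noteq> 0"
  using nonvanishing[of n] nonvanishing[of "Suc n"] by (simp add: lu_beta_def)

lemma lu_diag: "b n = c + beta n + (if n = 0 then 0 else ell n)"
proof -
  have "c * poly (P n) c = poly (P (Suc n)) c + b n * poly (P n) c
      + (if n = 0 then 0 else a n * poly (P (n - 1)) c)"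
    using arg_cong[OF P_rec[of n], of "\<lambda>p. poly p c"] by simp
  then show ?thesis
    using nonvanishing[of n]
    by (cases "n = 0") (simp_all add: lu_beta_def lu_ell_def field_simps)
qed

lemma lu_subdiag: "a (Suc n) = ell (Suc n) * beta n"
  using nonvanishing[of n] nonvanishing[of "Suc n"]
  by (simp add: lu_beta_def lu_ell_def field_simps)

lemma b_0_neq_c: "b 0 \<noteq> c"
  using nonvanishing[of 1] by (simp add: P_1)

lemma ell_1: "ell (Suc 0) = a (Suc 0) / (b 0 - c)"
  using b_0_neq_c by (simp add: lu_ell_def P_0 P_1 field_simps)

section \<open>The factorization J_alpha - c I = L_1 U_1\<close>

lemma mfun_one_nonzero: "mfun m 1 \<noteq> 0"
  using smop P_0 unfolding is_smop_def by (metis mult_1)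

lemma mfun_linear_factor: "mfun m [:- c, 1:] = (b 0 - c) * mfun m 1"
proof -
  have "mfun m (P 1 * P 0) = 0" using smop unfolding is_smop_def by simp
  then have "m 1 = b 0 * m 0" by (simp add: P_0 P_1 mfun_def)
  then show ?thesis by (simp add: mfun_def algebra_simps)
qed

definition alpha_num :: "nat \<Rightarrow> complex poly" where
  "alpha_num n = [:- c, 1:] * assoc1 b a n - P (Suc n)"

definition alpha :: "nat \<Rightarrow> complex poly" where
  "alpha n = smult (1 / (b 0 - c)) (alpha_num n)"

lemma alpha_num_0: "alpha_num 0 = [:b 0 - c:]"
  by (simp add: alpha_num_def assoc1_def P_1)

lemma alpha_num_rec: "[:0,1:] * alpha_num n = alpha_num (Suc n) + smult (b (Suc n)) (alpha_num n)
    + (if n = 0 then - [:a 1:] else smult (a (Suc n)) (alpha_num (n - 1)))"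
proof -
  let ?A = "assoc1 b a"
  have A_rec: "[:0,1:] * ?A n - (?A (Suc n) + smult (b (Suc n)) (?A n)
      + (if n = 0 then 0 else smult (a (Suc n)) (?A (n - 1)))) = 0"
    using three_term_orth_rec[of "\<lambda>n. b (Suc n)" "\<lambda>n. a (Suc n)"]
    unfolding three_term_def assoc1_def by simp
  have P_rec': "[:0,1:] * P (Suc n) - (P (Suc (Suc n)) + smult (b (Suc n)) (P (Suc n))
      + smult (a (Suc n)) (P n)) = 0"
    using P_rec[of "Suc n"] by simp
  have "[:0,1:] * alpha_num n - (alpha_num (Suc n) + smult (b (Suc n)) (alpha_num n)
      + (if n = 0 then - [:a 1:] else smult (a (Suc n)) (alpha_num (n - 1))))
    = [:- c, 1:] * ([:0,1:] * ?A n - (?A (Suc n) + smult (b (Suc n)) (?A n)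
      + (if n = 0 then 0 else smult (a (Suc n)) (?A (n - 1)))))
      - ([:0,1:] * P (Suc n) - (P (Suc (Suc n)) + smult (b (Suc n)) (P (Suc n))
      + smult (a (Suc n)) (P n)))"
    by (cases n) (auto intro!: poly_eqI_eval simp: alpha_num_def P_0 algebra_simps)
  then show ?thesis using A_rec P_rec' by simp
qed

lemma three_term_alpha:
  "three_term alpha (\<lambda>n. b (Suc n) - (if n = 0 then ell 1 else 0)) (\<lambda>n. a (Suc n))"
  unfolding three_term_def
proof (intro conjI allI)
  define K where "K = 1 / (b 0 - c)"
  have alpha_K: "alpha n = smult K (alpha_num n)" for n by (simp add: alpha_def K_def)
  show alpha_0: "alpha 0 = 1"
    using b_0_neq_c by (simp add: alpha_def alpha_num_0 one_pCons)
  fix n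
  show "[:0,1:] * alpha n = alpha (Suc n) + smult (b (Suc n) - (if n = 0 then ell 1 else 0)) (alpha n)
      + (if n = 0 then 0 else smult (a (Suc n)) (alpha (n - 1)))"
  proof (cases n)
    case 0
    have "[:0,1:] * alpha 0 = smult K ([:0,1:] * alpha_num 0)" by (simp add: alpha_K)
    also have "\<dots> = alpha 1 + smult (b 1) (alpha 0) - [:K * a 1:]"
      using alpha_num_rec[of 0] by (simp add: alpha_K smult_add_right mult.commute)
    also have "\<dots> = alpha 1 + smult (b 1 - ell 1) (alpha 0)"
      using alpha_0 by (auto intro!: poly_eqI_eval simp: K_def ell_1)
    finally show ?thesis using 0 by simp
  next
    case (Suc k)
    then show ?thesis
      using arg_cong[OF alpha_num_rec[of n], of "smult K"] by (simp add: alpha_K smult_add_right mult.commute)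
  qed
qed

lemma alpha_jacobi_minus_cI:
  "minus_cI (monic_jacobi (\<lambda>n. b (Suc n) - (if n = 0 then ell 1 else 0)) (\<lambda>n. a (Suc n))) c
     = imat_mult (lbidiag (\<lambda>i. ell (Suc i))) (ubidiag (\<lambda>i. beta (Suc i)))"
  using lu_diag lu_subdiag
  by (intro ext) (auto simp: lbidiag_mult_ubidiag minus_cI_def monic_jacobi_def)

lemma alpha_jacobi_factorization:
  "\<exists>J. monic_jacobi_of
         (\<lambda>n. smult (mfun m 1 / mfun m [:- c, 1:]) ([:- c, 1:] * assoc1 b a n - P (Suc n))) J
       \<and> minus_cI J c = imat_mult (lbidiag (\<lambda>i. ell (Suc i))) (ubidiag (\<lambda>i. beta (Suc i)))"
proof -
  have "mfun m 1 / mfun m [:- c, 1:] = 1 / (b 0 - c)"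
    using mfun_one_nonzero by (simp add: mfun_linear_factor)
  then show ?thesis
    using three_term_alpha alpha_jacobi_minus_cI
    unfolding monic_jacobi_of_def alpha_def alpha_num_def by auto
qed

section \<open>Kernel polynomials and the factorization U_1 L_1\<close>

definition kernel_num :: "nat \<Rightarrow> complex poly" where
  "kernel_num n = P (Suc n) + smult (beta n) (P n)"

lemma kernel_num_root: "poly (kernel_num n) c = 0"
  using nonvanishing[of n] by (simp add: kernel_num_def lu_beta_def)

lemma kernel_num_0: "kernel_num 0 = [:- c, 1:]"
  by (simp add: kernel_num_def lu_beta_def P_0 P_1)

lemma kernel_num_degree: "degree (kernel_num n) = Suc n"
  and kernel_num_coeff_degree: "coeff (kernel_num n) (Suc n) = 1"
proof -
  have "degree (smult (beta n) (P n)) < degree (P (Suc n))"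
    using smop_degree[OF smop] by (simp add: le_less_trans[OF degree_smult_le])
  then show "degree (kernel_num n) = Suc n"
    unfolding kernel_num_def by (simp add: degree_add_eq_left smop_degree[OF smop])
  have "coeff (P n) (Suc n) = 0" by (simp add: coeff_eq_0 smop_degree[OF smop])
  then show "coeff (kernel_num n) (Suc n) = 1"
    by (simp add: kernel_num_def smop_coeff_degree[OF smop])
qed

lemma kernel_num_orth: "degree q < n \<Longrightarrow> mfun m (kernel_num n * q) = 0"
  using P_orth_lower[of q n] P_orth_lower[of q "Suc n"]
  by (simp add: kernel_num_def distrib_right mfun_add mfun_smult)

lemma kernel_num_norm:
  assumes "degree q = n" and "coeff q n = 1"
  shows "mfun m (kernel_num n * q) = beta n * mfun m (P n * P n)"
  using assms P_orth_lower[of q "Suc n"] P_orth_leading[of q]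
  by (simp add: kernel_num_def distrib_right mfun_add mfun_smult)

lemma kernel_num_rec:
  "[:0,1:] * kernel_num n = kernel_num (Suc n) + smult (c + beta n + ell (Suc n)) (kernel_num n)
    + (if n = 0 then 0 else smult (beta n * ell n) (kernel_num (n - 1)))"
proof -
  define e where "e k = [:0,1:] * P k - (P (Suc k) + smult (b k) (P k)
      + (if k = 0 then 0 else smult (a k) (P (k - 1))))" for k
  have e_0: "e k = 0" for k using P_rec[of k] by (simp add: e_def)
  define k1 where "k1 = b (Suc n) + beta n - beta (Suc n) - (c + beta n + ell (Suc n))"
  define k2 where "k2 = a (Suc n) + beta n * b n - (c + beta n + ell (Suc n)) * beta n
      - (if n = 0 then 0 else beta n * ell n)"
  define k3 where "k3 = beta n * a n - beta n * ell n * beta (n - 1)"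
  have "[:0,1:] * kernel_num n - (kernel_num (Suc n)
      + smult (c + beta n + ell (Suc n)) (kernel_num n)
      + (if n = 0 then 0 else smult (beta n * ell n) (kernel_num (n - 1))))
    = e (Suc n) + smult (beta n) (e n) + smult k1 (P (Suc n)) + smult k2 (P n)
      + (if n = 0 then 0 else smult k3 (P (n - 1)))"
    by (cases n) (auto intro!: poly_eqI_eval simp: e_def kernel_num_def k1_def k2_def k3_def
        algebra_simps)
  moreover have "k1 = 0" using lu_diag[of "Suc n"] by (simp add: k1_def)
  moreover have "k2 = 0" using lu_diag[of n] lu_subdiag[of n] by (simp add: k2_def algebra_simps)
  moreover have "n \<noteq> 0 \<Longrightarrow> k3 = 0"
    using lu_subdiag[of "n - 1"] by (cases n) (simp_all add: k3_def)
  ultimately show ?thesis using e_0 by (cases "n = 0") auto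
qed

definition kernel :: "nat \<Rightarrow> complex poly" where
  "kernel n = kernel_num n div [:- c, 1:]"

lemma linear_factor_mult_kernel: "[:- c, 1:] * kernel n = kernel_num n"
proof -
  have "[:- c, 1:] dvd kernel_num n" using kernel_num_root poly_eq_0_iff_dvd by blast
  then show ?thesis unfolding kernel_def by (rule dvd_mult_div_cancel)
qed

lemma smop_kernel: "is_smop (\<lambda>p. mfun m ([:- c, 1:] * p)) kernel"
proof -
  have deg: "degree (kernel n) = n" and lead: "coeff (kernel n) n = 1" for n
    using linear_factor_cancel_monic[OF linear_factor_mult_kernel kernel_num_degree
        kernel_num_coeff_degree] by auto
  have shift: "mfun m ([:- c, 1:] * (kernel n * q)) = mfun m (kernel_num n * q)" for n q
    by (simp only: mult.assoc[symmetric] linear_factor_mult_kernel)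
  have orth: "mfun m ([:- c, 1:] * (kernel n * kernel k)) = 0" if "k < n" for n k
    using shift kernel_num_orth deg that by simp
  show ?thesis unfolding is_smop_def
  proof (intro conjI allI impI)
    fix n
    show "degree (kernel n) = n" "lead_coeff (kernel n) = 1" using deg lead by auto
    show "mfun m ([:- c, 1:] * (kernel n * kernel n)) \<noteq> 0"
      using shift kernel_num_norm[OF deg lead] beta_nonzero[of n] smop
      unfolding is_smop_def by simp
  next
    fix n k :: nat
    assume "n \<noteq> k"
    then show "mfun m ([:- c, 1:] * (kernel n * kernel k)) = 0"
      using orth[of k n] orth[of n k] by (cases "k < n") (auto simp: mult.commute)
  qed
qed

lemma three_term_kernel:
  "three_term kernel (\<lambda>n. c + beta n + ell (Suc n)) (\<lambda>n. beta n * ell n)"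
  unfolding three_term_def
proof (intro conjI allI)
  define X where "X = [:- c, 1:]"
  have X_nz: "X \<noteq> 0" by (simp add: X_def)
  have X_kernel: "X * kernel k = kernel_num k" for k
    unfolding X_def by (rule linear_factor_mult_kernel)
  have "X * kernel 0 = X * 1"
    by (simp add: X_kernel kernel_num_0 X_def[symmetric])
  then show "kernel 0 = 1" using X_nz by simp
  fix n
  have "X * ([:0,1:] * kernel n) = X * (kernel (Suc n)
      + smult (c + beta n + ell (Suc n)) (kernel n)
      + (if n = 0 then 0 else smult (beta n * ell n) (kernel (n - 1))))"
    using kernel_num_rec[of n] by (simp add: distrib_left mult.left_commute[of X] X_kernel)
  then show "[:0,1:] * kernel n = kernel (Suc n) + smult (c + beta n + ell (Suc n)) (kernel n)
      + (if n = 0 then 0 else smult (beta n * ell n) (kernel (n - 1)))"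
    by (simp only: mult_left_cancel[OF X_nz])
qed

lemma kernel_jacobi_minus_cI:
  "minus_cI (monic_jacobi (\<lambda>n. c + beta (Suc n) + ell (Suc (Suc n)))
                          (\<lambda>n. beta (Suc n) * ell (Suc n))) c
     = imat_mult (ubidiag (\<lambda>i. beta (Suc i))) (lbidiag (\<lambda>i. ell (Suc i)))"
  by (intro ext) (auto simp: ubidiag_mult_lbidiag minus_cI_def monic_jacobi_def mult.commute)

lemma associated_jacobi_factorization:
  assumes S: "is_smop (\<lambda>p. mfun m ([:- c, 1:] * p)) Pt" and rec_Pt: "three_term Pt bt aa"
  shows "\<exists>J. monic_jacobi_of (assoc1 bt aa) J
           \<and> minus_cI J c = imat_mult (ubidiag (\<lambda>i. beta (Suc i))) (lbidiag (\<lambda>i. ell (Suc i)))"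
proof (intro exI conjI)
  have "Pt = kernel"
    using smop_unique[OF smop_kernel S] linear_functional_mult_left[OF linear_functional_mfun]
    by blast
  then have "bt n = c + beta n + ell (Suc n)" and "aa (Suc n) = beta (Suc n) * ell (Suc n)" for n
    using three_term_coeffs_unique[OF rec_Pt] three_term_kernel smop_degree[OF S] by auto
  then show "minus_cI (monic_jacobi (\<lambda>n. bt (Suc n)) (\<lambda>n. aa (Suc n))) c
      = imat_mult (ubidiag (\<lambda>i. beta (Suc i))) (lbidiag (\<lambda>i. ell (Suc i)))"
    using kernel_jacobi_minus_cI by simp
  show "monic_jacobi_of (assoc1 bt aa) (monic_jacobi (\<lambda>n. bt (Suc n)) (\<lambda>n. aa (Suc n)))"
    unfolding assoc1_def by (rule monic_jacobi_of_orth_rec)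
qed

end

theorem mainTheorem12:
  fixes m :: "nat \<Rightarrow> complex" and P :: "nat \<Rightarrow> complex poly"
    and b a :: "nat \<Rightarrow> complex" and c :: complex
  assumes qd: "quasi_definite m"
    and smop: "is_smop (mfun m) P"
    and rec: "three_term P b a"
    and nz: "\<forall>n. poly (P n) c \<noteq> 0"
  defines "ut \<equiv> \<lambda>p. mfun m ([:- c, 1:] * p)"
    and "R \<equiv> \<lambda>n. smult (mfun m 1 / mfun m [:- c, 1:]) ([:- c, 1:] * assoc1 b a n - P (Suc n))"
    and "L1 \<equiv> lbidiag (\<lambda>i. lu_ell P a c (Suc i))"
    and "U1 \<equiv> ubidiag (\<lambda>i. lu_beta P c (Suc i))"
  shows "(\<exists>J\<alpha>. monic_jacobi_of R J\<alpha> \<and> minus_cI J\<alpha> c = imat_mult L1 U1)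
       \<and> (\<exists>Pt. is_smop ut Pt)
       \<and> (\<forall>Pt bt aa. is_smop ut Pt \<and> three_term Pt bt aa \<longrightarrow>
            (\<exists>Jt. monic_jacobi_of (assoc1 bt aa) Jt \<and> minus_cI Jt c = imat_mult U1 L1))"
proof -
  interpret smop_nonvanishing_at m P b a c
    using smop rec nz by unfold_locales auto
  show ?thesis
    unfolding ut_def R_def L1_def U1_def
    using alpha_jacobi_factorization smop_kernel associated_jacobi_factorization by blast
qed

end
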